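(* Let $\mathcal{R}$ be a cell space, let $m\in M$ and let $\mathfrak{g}\in G/G_0$. There is an element $g\in\mathfrak{g}$ such that for every $\mathfrak{g}'\in G/G_0$ we have $(m\triangleleft\mathfrak{g})\triangleleft\mathfrak{g}'=m\triangleleft g\cdot\mathfrak{g}'$; in particular, for this $g$, $(m\triangleleft\mathfrak{g})\triangleleft g^{-1}G_0=m$.
   Context: A cell space $\mathcal{R}$ consists of a group $G$ acting transitively on the left on a nonempty set $M$ via $\triangleright$, a point $m_0\in M$ and a family $(g_{m_0,m})_{m\in M}$ in $G$ with $g_{m_0,m}\triangleright m_0=m$. $G_0$ is the stabiliser of $m_0$, $G/G_0$ the set of left cosets (elements are subsets of $G$), with $G$ acting by $g\cdot hG_0=ghG_0$. The right semi-action $\triangleleft\colon M\times G/G_0\to M$ is $m\triangleleft gG_0=g_{m_0,m}g\triangleright m_0$. *)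

theory Defs
  imports "HOL-Algebra.Coset"
begin

definition cell_space ::
  "('g, 'b) monoid_scheme \<Rightarrow> 'm set \<Rightarrow> ('g \<Rightarrow> 'm \<Rightarrow> 'm) \<Rightarrow> 'm \<Rightarrow> ('m \<Rightarrow> 'g) \<Rightarrow> bool" where
  "cell_space G M act m0 gfam \<longleftrightarrow>
     group G \<and> M \<noteq> {} \<and>
     (\<forall>g\<in>carrier G. \<forall>m\<in>M. act g m \<in> M) \<and>
     (\<forall>m\<in>M. act \<one>\<^bsub>G\<^esub> m = m) \<and>
     (\<forall>g\<in>carrier G. \<forall>h\<in>carrier G. \<forall>m\<in>M. act (g \<otimes>\<^bsub>G\<^esub> h) m = act g (act h m)) \<and>
     (\<forall>m\<in>M. \<forall>m'\<in>M. \<exists>g\<in>carrier G. act g m = m') \<and>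
     m0 \<in> M \<and>
     (\<forall>m\<in>M. gfam m \<in> carrier G \<and> act (gfam m) m0 = m)"

definition stab :: "('g, 'b) monoid_scheme \<Rightarrow> ('g \<Rightarrow> 'm \<Rightarrow> 'm) \<Rightarrow> 'm \<Rightarrow> 'g set" where
  "stab G act m0 = {g \<in> carrier G. act g m0 = m0}"

definition lcosets :: "('g, 'b) monoid_scheme \<Rightarrow> 'g set \<Rightarrow> 'g set set" where
  "lcosets G H = (\<Union>g\<in>carrier G. {g <#\<^bsub>G\<^esub> H})"

text \<open>Right semi-action: m \<triangleleft> gG_0 = (gfam m \<otimes> g) act m0, for any representative g.\<close>
definition rsa :: "('g, 'b) monoid_scheme \<Rightarrow> ('g \<Rightarrow> 'm \<Rightarrow> 'm) \<Rightarrow> 'm \<Rightarrow> ('m \<Rightarrow> 'g)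
    \<Rightarrow> 'm \<Rightarrow> 'g set \<Rightarrow> 'm" where
  "rsa G act m0 gfam m C = act (gfam m \<otimes>\<^bsub>G\<^esub> (SOME g. g \<in> C)) m0"

end

theory Submission
  imports Defs
begin

text \<open>Two representatives of G/G_0 lie in the same coset exactly when they move m0 to the same
  point. Hence m \<triangleleft> gG_0 does not depend on the representative, and the element
  g = g_{m0,m}^{-1} g_{m0,m'} carrying the chosen representative of m to that of
  m' = m \<triangleleft> cG_0 satisfies g m0 = c m0, so g \<in> cG_0. Then
  m' \<triangleleft> kG_0 = g_{m0,m'} k m0 = g_{m0,m} (g k) m0 = m \<triangleleft> g kG_0, and for k = g^{-1}
  the right-hand side is g_{m0,m} m0 = m.\<close>

locale cell_space_locale =
  fixes G :: "('g, 'b) monoid_scheme" (structure)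
    and M :: "'m set" and act :: "'g \<Rightarrow> 'm \<Rightarrow> 'm" and m0 :: 'm and gfam :: "'m \<Rightarrow> 'g"
  assumes cell_space: "cell_space G M act m0 gfam"
begin

abbreviation G0 :: "'g set" where
  "G0 \<equiv> stab G act m0"

abbreviation right_act :: "'m \<Rightarrow> 'g set \<Rightarrow> 'm" (infixl "\<triangleleft>" 65) where
  "m \<triangleleft> C \<equiv> rsa G act m0 gfam m C"

sublocale group G
  using cell_space unfolding cell_space_def by blast

lemma act_closed: "g \<in> carrier G \<Longrightarrow> m \<in> M \<Longrightarrow> act g m \<in> M"
  using cell_space unfolding cell_space_def by blast

lemma act_one: "m \<in> M \<Longrightarrow> act \<one> m = m"
  using cell_space unfolding cell_space_def by blast

lemma act_mult: "g \<in> carrier G \<Longrightarrow> h \<in> carrier G \<Longrightarrow> m \<in> M \<Longrightarrow> act (g \<otimes> h) m = act g (act h m)"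
  using cell_space unfolding cell_space_def by blast

lemma base_point_in: "m0 \<in> M"
  using cell_space unfolding cell_space_def by blast

lemma gfam_closed: "m \<in> M \<Longrightarrow> gfam m \<in> carrier G"
  using cell_space unfolding cell_space_def by blast

lemma act_gfam: "m \<in> M \<Longrightarrow> act (gfam m) m0 = m"
  using cell_space unfolding cell_space_def by blast

lemma stab_subset: "G0 \<subseteq> carrier G"
  unfolding stab_def by auto

lemma act_base_point_closed: "g \<in> carrier G \<Longrightarrow> act g m0 \<in> M"
  by (simp add: act_closed base_point_in)

lemma l_coset_stab_iff:
  assumes x: "x \<in> carrier G" and a: "a \<in> carrier G"
  shows "x \<in> a <# G0 \<longleftrightarrow> act x m0 = act a m0"
proof
  assume "x \<in> a <# G0"
  then obtain h where h: "h \<in> G0" "x = a \<otimes> h"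
    unfolding l_coset_def by auto
  then show "act x m0 = act a m0"
    using a stab_subset by (auto simp: act_mult base_point_in stab_def)
next
  assume eq: "act x m0 = act a m0"
  have "act (inv a \<otimes> x) m0 = act (inv a \<otimes> a) m0"
    using x a by (simp only: act_mult base_point_in eq inv_closed)
  then have "inv a \<otimes> x \<in> G0"
    using x a by (simp add: stab_def act_one base_point_in)
  moreover have "x = a \<otimes> (inv a \<otimes> x)"
    using x a by (simp add: m_assoc[symmetric])
  ultimately show "x \<in> a <# G0"
    unfolding l_coset_def by auto
qed

lemma right_act_l_coset:
  assumes a: "a \<in> carrier G" and m: "m \<in> M"
  shows "m \<triangleleft> (a <# G0) = act (gfam m \<otimes> a) m0"
proof -
  have "a \<in> a <# G0"
    using a by (simp add: l_coset_stab_iff)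
  then have rep: "(SOME x. x \<in> a <# G0) \<in> a <# G0"
    by (rule someI)
  then have "(SOME x. x \<in> a <# G0) \<in> carrier G"
    using a stab_subset by (auto simp: l_coset_def)
  with rep show ?thesis
    unfolding rsa_def
    using a m by (simp add: act_mult gfam_closed base_point_in l_coset_stab_iff)
qed

lemma right_act_closed: "m \<in> M \<Longrightarrow> C \<in> lcosets G G0 \<Longrightarrow> m \<triangleleft> C \<in> M"
  unfolding lcosets_def
  by (auto simp: right_act_l_coset gfam_closed act_base_point_closed)

definition transition :: "'m \<Rightarrow> 'm \<Rightarrow> 'g" where
  "transition m m' = inv (gfam m) \<otimes> gfam m'"

lemma transition_closed: "m \<in> M \<Longrightarrow> m' \<in> M \<Longrightarrow> transition m m' \<in> carrier G"
  by (simp add: transition_def gfam_closed)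

lemma gfam_mult_transition: "m \<in> M \<Longrightarrow> m' \<in> M \<Longrightarrow> gfam m \<otimes> transition m m' = gfam m'"
  by (simp add: transition_def gfam_closed m_assoc[symmetric])

lemma transition_in_coset:
  assumes m: "m \<in> M" and C: "C \<in> lcosets G G0"
  shows "transition m (m \<triangleleft> C) \<in> C"
proof -
  obtain c where c: "c \<in> carrier G" and C_eq: "C = c <# G0"
    using C unfolding lcosets_def by auto
  let ?f = "gfam m" and ?m' = "m \<triangleleft> C"
  have m': "?m' \<in> M"
    using m C by (rule right_act_closed)
  have "act (transition m ?m') m0 = act (inv ?f) (act (gfam ?m') m0)"
    using m m' by (simp add: transition_def act_mult gfam_closed base_point_in)
  also have "\<dots> = act (inv ?f) (act (?f \<otimes> c) m0)"
    using m' by (simp add: act_gfam C_eq right_act_l_coset c m)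
  also have "\<dots> = act c m0"
    using m c by (simp add: act_mult[symmetric] gfam_closed base_point_in m_assoc[symmetric])
  finally show ?thesis
    using l_coset_stab_iff[OF transition_closed[OF m m'] c] C_eq by blast
qed

lemma right_act_transition:
  assumes m: "m \<in> M" and m': "m' \<in> M" and C': "C' \<in> lcosets G G0"
  shows "m' \<triangleleft> C' = m \<triangleleft> (transition m m' <# C')"
proof -
  obtain k where k: "k \<in> carrier G" and C'_eq: "C' = k <# G0"
    using C' unfolding lcosets_def by auto
  let ?g = "transition m m'"
  have g: "?g \<in> carrier G"
    using m m' by (rule transition_closed)
  have "m \<triangleleft> (?g <# C') = m \<triangleleft> ((?g \<otimes> k) <# G0)"
    using g k by (simp add: C'_eq lcos_m_assoc stab_subset)
  also have "\<dots> = act ((gfam m \<otimes> ?g) \<otimes> k) m0"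
    using g k m by (simp add: right_act_l_coset m_assoc gfam_closed)
  also have "\<dots> = m' \<triangleleft> C'"
    using k m m' by (simp add: gfam_mult_transition C'_eq right_act_l_coset)
  finally show ?thesis ..
qed

lemma right_act_inv_transition:
  assumes m: "m \<in> M" and m': "m' \<in> M"
  shows "m' \<triangleleft> (inv (transition m m') <# G0) = m"
proof -
  let ?g = "transition m m'"
  have g: "?g \<in> carrier G"
    using m m' by (rule transition_closed)
  have C': "inv ?g <# G0 \<in> lcosets G G0"
    using g unfolding lcosets_def by auto
  have "m' \<triangleleft> (inv ?g <# G0) = m \<triangleleft> ((?g \<otimes> inv ?g) <# G0)"
    using right_act_transition[OF m m' C'] g by (simp add: lcos_m_assoc stab_subset)
  also have "\<dots> = m"
    using m g by (simp add: right_act_l_coset gfam_closed act_gfam)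
  finally show ?thesis .
qed

end

theorem lemma4:
  fixes G :: "('g, 'b) monoid_scheme" and M :: "'m set" and act :: "'g \<Rightarrow> 'm \<Rightarrow> 'm"
    and m0 :: 'm and gfam :: "'m \<Rightarrow> 'g"
  assumes "cell_space G M act m0 gfam"
    and "m \<in> M"
    and "C \<in> lcosets G (stab G act m0)"
  shows "\<exists>g\<in>C.
    (\<forall>C'\<in>lcosets G (stab G act m0).
        rsa G act m0 gfam (rsa G act m0 gfam m C) C' = rsa G act m0 gfam m (g <#\<^bsub>G\<^esub> C')) \<and>
    rsa G act m0 gfam (rsa G act m0 gfam m C) (inv\<^bsub>G\<^esub> g <#\<^bsub>G\<^esub> stab G act m0) = m"
proof -
  interpret cell_space_locale G M act m0 gfam
    using assms(1) by unfold_locales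
  have m': "m \<triangleleft> C \<in> M"
    using assms(2,3) by (rule right_act_closed)
  show ?thesis
  proof (intro bexI conjI ballI)
    show "transition m (m \<triangleleft> C) \<in> C"
      using assms(2,3) by (rule transition_in_coset)
    show "m \<triangleleft> C \<triangleleft> C' = m \<triangleleft> (transition m (m \<triangleleft> C) <#\<^bsub>G\<^esub> C')" if "C' \<in> lcosets G G0" for C'
      using assms(2) m' that by (rule right_act_transition)
    show "m \<triangleleft> C \<triangleleft> (inv\<^bsub>G\<^esub> transition m (m \<triangleleft> C) <#\<^bsub>G\<^esub> G0) = m"
      using assms(2) m' by (rule right_act_inv_transition)
  qed
qed

end
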